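(* Consider the broadcast tree model with parameters $k\ge2$ and $\theta\in[-1,1]$, and $n=k^d$. If $\theta$ is dyadic, $\theta=a/2^b$ for integers $a,b$, then there exists a family of generation functions computable by $\mathbf{AC}^0$ circuits. Moreover, for every $\theta$ and every constant $c>0$ there exists a family of $2^{-n^c}$-approximate-generation functions computable by $\mathbf{AC}^0$ circuits.
   Context: Broadcast (Ising) tree model: complete $k$-ary tree of depth $d$ with root $\rho$; $L_r$ = vertices at depth $r$; $\sigma_\rho$ uniform on $\{0,1\}$; each child $v$ of $u$ independently has $\sigma_v=\sigma_u$ with probability $(1+\theta)/2$ and $1-\sigma_u$ otherwise; $X^{(d)}=(\sigma_v)_{v\in L_d}$. A family $f_d:\{0,1\}^{m(d)}\to\{0,1\}^{L_d}$ is a family of generation functions if, for uniformly random input, $f_d$'s output has exactly the distribution of $X^{(d)}$ for all $d$; it is a family of $(\delta_d)$-approximate-generation functions if the total variation distance between the output distribution and that of $X^{(d)}$ is at most $\delta_d$ for all $d$. $\mathbf{AC}^0$: constant-depth, polynomial-size (in $n$) circuits with NOT and unbounded fan-in AND/OR gates. *)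

theory Defs
  imports "HOL-Probability.Probability"
begin

text \<open>Wires of a circuit with m inputs: wires 0..m-1 are the inputs; the i-th gate
  (0-based) produces wire m+i and may only read wires with smaller index.\<close>

datatype gate = NotG nat | AndG "nat list" | OrG "nat list"

record circuit =
  c_inputs :: nat
  c_gates :: "gate list"
  c_outputs :: "nat list"

fun gate_args :: "gate \<Rightarrow> nat list" where
  "gate_args (NotG i) = [i]"
| "gate_args (AndG is) = is"
| "gate_args (OrG is) = is"

definition wf_circuit :: "circuit \<Rightarrow> bool" where
  "wf_circuit C \<longleftrightarrow>
     (\<forall>i < length (c_gates C). \<forall>j \<in> set (gate_args (c_gates C ! i)). j < c_inputs C + i)
   \<and> (\<forall>j \<in> set (c_outputs C). j < c_inputs C + length (c_gates C))"

fun gate_val :: "gate \<Rightarrow> bool list \<Rightarrow> bool" where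
  "gate_val (NotG i) vs = (\<not> vs ! i)"
| "gate_val (AndG is) vs = (\<forall>j \<in> set is. vs ! j)"
| "gate_val (OrG is) vs = (\<exists>j \<in> set is. vs ! j)"

fun eval_gates :: "gate list \<Rightarrow> bool list \<Rightarrow> bool list" where
  "eval_gates [] vs = vs"
| "eval_gates (g # gs) vs = eval_gates gs (vs @ [gate_val g vs])"

definition circ_eval :: "circuit \<Rightarrow> bool list \<Rightarrow> bool list" where
  "circ_eval C xs = (let vs = eval_gates (c_gates C) xs in map (\<lambda>j. vs ! j) (c_outputs C))"

fun gate_depths :: "gate list \<Rightarrow> nat list \<Rightarrow> nat list" where
  "gate_depths [] ds = ds"
| "gate_depths (g # gs) ds = gate_depths gs (ds @ [Suc (foldr max (map (\<lambda>j. ds ! j) (gate_args g)) 0)])"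

definition circ_depth :: "circuit \<Rightarrow> nat" where
  "circ_depth C = foldr max (gate_depths (c_gates C) (replicate (c_inputs C) 0)) 0"

definition circ_size :: "circuit \<Rightarrow> nat" where
  "circ_size C = c_inputs C + length (c_gates C)"

text \<open>A family (C d) indexed by the tree depth d, with n = k^d, is an AC0 family if it has
  constant depth and size polynomial in n (non-uniform).\<close>
definition AC0_family :: "nat \<Rightarrow> (nat \<Rightarrow> circuit) \<Rightarrow> bool" where
  "AC0_family k C \<longleftrightarrow> (\<exists>D c e::nat. \<forall>d. wf_circuit (C d) \<and> circ_depth (C d) \<le> D
       \<and> circ_size (C d) \<le> c * (k ^ d) ^ e)"

fun seq_pmf :: "'a pmf list \<Rightarrow> 'a list pmf" where
  "seq_pmf [] = return_pmf []"
| "seq_pmf (p # ps) = bind_pmf p (\<lambda>x. bind_pmf (seq_pmf ps) (\<lambda>xs. return_pmf (x # xs)))"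

text \<open>Leaves are listed in lexicographic order of their addresses in {0..k-1}^d.\<close>
fun bcast :: "nat \<Rightarrow> real \<Rightarrow> nat \<Rightarrow> bool \<Rightarrow> bool list pmf" where
  "bcast k \<theta> 0 s = return_pmf [s]"
| "bcast k \<theta> (Suc d) s = map_pmf concat (seq_pmf (replicate k
     (bind_pmf (bernoulli_pmf ((1 + \<theta>) / 2)) (\<lambda>b. bcast k \<theta> d (if b then s else \<not> s)))))"

definition broadcast_leaves :: "nat \<Rightarrow> real \<Rightarrow> nat \<Rightarrow> bool list pmf" where
  "broadcast_leaves k \<theta> d = bind_pmf (bernoulli_pmf (1/2)) (bcast k \<theta> d)"

definition uniform_bits :: "nat \<Rightarrow> bool list pmf" where
  "uniform_bits m = pmf_of_set {xs. length xs = m}"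

definition tv_dist :: "'a pmf \<Rightarrow> 'a pmf \<Rightarrow> real" where
  "tv_dist p q = (SUP A. \<bar>measure_pmf.prob p A - measure_pmf.prob q A\<bar>)"

definition output_dist :: "circuit \<Rightarrow> bool list pmf" where
  "output_dist C = map_pmf (circ_eval C) (uniform_bits (c_inputs C))"

end

theory Submission
  imports Defs
begin

(* Each edge of the tree is simulated with a block of fresh uniform bits. If theta = A/2^b is dyadic,
   comparing b of these bits with the binary expansion of A yields an event of probability A/2^b;
   on this event the child copies the parent's spin (negated when theta < 0), otherwise it takes
   the remaining fresh bit. This reproduces the transition probability (1 + theta)/2 exactly.
   Unrolled along a root-to-leaf path, the spin of a leaf is the fresh bit of the last edge that did
   not copy, flipped once for each later edge when theta < 0, or the flipped root spin if all edges
   copied. That is an OR of ANDs of comparisons: a formula of depth 6 and size polynomial in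
   n = k^d. For arbitrary theta, rounding |theta| to n^c + 2n binary digits perturbs each edge law by
   at most 2^-(n^c + 2n), and a hybrid argument over the at most n^2 edges bounds the total
   variation distance by 2^-(n^c). *)

section \<open>Uniform bits and total variation\<close>

abbreviation coin :: "bool pmf" where
  "coin \<equiv> bernoulli_pmf (1/2)"

lemma seq_pmf_replicate: "seq_pmf (replicate n p) = replicate_pmf n p"
  by (induction n) auto

lemma replicate_pmf_Suc_map:
  "replicate_pmf (Suc n) p = p \<bind> (\<lambda>x. map_pmf ((#) x) (replicate_pmf n p))"
  by (simp add: map_pmf_def)

lemma set_pmf_replicate_coin: "set_pmf (replicate_pmf n coin) = {xs. length xs = n}"
  by (simp add: set_replicate_pmf)

lemma pmf_replicate_coin:
  "pmf (replicate_pmf n coin) xs = (if length xs = n then 1 / 2 ^ n else 0)"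
proof (induction n arbitrary: xs)
  case 0
  then show ?case by (cases xs) (auto simp: pmf_return)
next
  case (Suc n)
  have "pmf (replicate_pmf (Suc n) coin) xs
        = (case xs of [] \<Rightarrow> 0 | _ # ys \<Rightarrow> pmf (replicate_pmf n coin) ys / 2)"
    unfolding replicate_pmf_Suc_map
    by (cases xs; cases "hd xs") (auto simp: pmf_bind pmf_map vimage_def measure_pmf_single)
  then show ?case
    using Suc.IH by (simp split: list.split)
qed

lemma uniform_bits_eq_replicate_coin: "uniform_bits n = replicate_pmf n coin"
proof (rule pmf_eqI)
  fix xs :: "bool list"
  have "card {xs :: bool list. length xs = n} = 2 ^ n"
    using card_lists_length_eq[of "UNIV :: bool set" n] by simp
  moreover have "finite {xs :: bool list. length xs = n}"
    using finite_lists_length_eq[of "UNIV :: bool set" n] by simp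
  moreover have "{xs :: bool list. length xs = n} \<noteq> {}"
    by (auto intro: exI[of _ "replicate n True"])
  ultimately show "pmf (uniform_bits n) xs = pmf (replicate_pmf n coin) xs"
    unfolding uniform_bits_def pmf_replicate_coin by (simp add: pmf_of_set)
qed

lemma replicate_pmf_mult:
  "replicate_pmf (k * n) p = map_pmf concat (replicate_pmf k (replicate_pmf n p))"
proof (induction k)
  case (Suc k)
  have "replicate_pmf (n + k * n) p
        = replicate_pmf n p \<bind> (\<lambda>xs. replicate_pmf (k * n) p \<bind> (\<lambda>ys. return_pmf (xs @ ys)))"
    by (rule replicate_pmf_distrib)
  then show ?case
    by (simp add: Suc map_pmf_def bind_assoc_pmf bind_return_pmf)
qed simp

lemma replicate_pmf_map: "replicate_pmf n (map_pmf f p) = map_pmf (map f) (replicate_pmf n p)"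
  by (induction n) (simp_all add: map_pmf_def bind_assoc_pmf bind_return_pmf)

lemma bool_pmf_eqI:
  fixes p q :: "bool pmf"
  assumes "pmf p True = pmf q True"
  shows "p = q"
proof (rule pmf_eqI)
  have "pmf r False = 1 - pmf r True" for r :: "bool pmf"
  proof -
    have "sum (pmf r) UNIV = 1"
      by (rule sum_pmf_eq_1) auto
    then show ?thesis
      by (simp add: UNIV_bool)
  qed
  then show "pmf p b = pmf q b" for b
    using assms by (cases b) simp_all
qed

lemma measure_bind_pmf:
  "measure_pmf.prob (bind_pmf p f) A = (\<integral>x. measure_pmf.prob (f x) A \<partial>p)"
proof -
  have "emeasure (bind_pmf p f) A = (\<integral>\<^sup>+x. ennreal (measure_pmf.prob (f x) A) \<partial>p)"
    by (subst emeasure_bind_pmf) (simp add: measure_pmf.emeasure_eq_measure)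
  also have "\<dots> = ennreal (\<integral>x. measure_pmf.prob (f x) A \<partial>p)"
    by (rule nn_integral_eq_integral) (auto intro!: measure_pmf.integrable_const_bound[where B=1])
  finally show ?thesis
    by (simp add: measure_pmf.emeasure_eq_measure)
qed

definition tv_close :: "real \<Rightarrow> 'a pmf \<Rightarrow> 'a pmf \<Rightarrow> bool" where
  "tv_close e p q \<longleftrightarrow> (\<forall>A. \<bar>measure_pmf.prob p A - measure_pmf.prob q A\<bar> \<le> e)"

lemma tv_dist_le: "tv_close e p q \<Longrightarrow> tv_dist p q \<le> e"
  unfolding tv_dist_def tv_close_def by (intro cSUP_least) auto

lemma tv_close_mono: "tv_close e p q \<Longrightarrow> e \<le> e' \<Longrightarrow> tv_close e' p q"
  unfolding tv_close_def by (meson order_trans)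

lemma tv_close_map: "tv_close e p q \<Longrightarrow> tv_close e (map_pmf f p) (map_pmf f q)"
  unfolding tv_close_def by simp

lemma tv_close_trans:
  assumes "tv_close e p q" "tv_close e' q r"
  shows "tv_close (e + e') p r"
  unfolding tv_close_def
proof
  fix A
  have "\<bar>measure_pmf.prob p A - measure_pmf.prob q A\<bar> \<le> e"
    "\<bar>measure_pmf.prob q A - measure_pmf.prob r A\<bar> \<le> e'"
    using assms by (simp_all add: tv_close_def)
  then show "\<bar>measure_pmf.prob p A - measure_pmf.prob r A\<bar> \<le> e + e'"
    by (simp add: abs_le_iff)
qed

lemma abs_prob_diff_le_1: "\<bar>measure_pmf.prob p A - measure_pmf.prob q B\<bar> \<le> 1"
  using measure_pmf.prob_le_1[of p A] measure_pmf.prob_le_1[of q B]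
    measure_nonneg[of p A] measure_nonneg[of q B]
  unfolding abs_le_iff by linarith

lemma tv_close_bind:
  assumes "\<And>x. tv_close e (f x) (g x)"
  shows "tv_close e (bind_pmf p f) (bind_pmf p g)"
  unfolding tv_close_def
proof
  fix A
  have "\<bar>measure_pmf.prob (bind_pmf p f) A - measure_pmf.prob (bind_pmf p g) A\<bar>
        = \<bar>\<integral>x. measure_pmf.prob (f x) A - measure_pmf.prob (g x) A \<partial>p\<bar>"
    unfolding measure_bind_pmf
    by (subst Bochner_Integration.integral_diff)
       (auto intro!: measure_pmf.integrable_const_bound[where B=1])
  also have "\<dots> \<le> (\<integral>x. \<bar>measure_pmf.prob (f x) A - measure_pmf.prob (g x) A\<bar> \<partial>p)"
    by (rule integral_abs_bound)
  also have "\<dots> \<le> (\<integral>x. e \<partial>p)"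
    using assms unfolding tv_close_def
    by (intro integral_mono) (auto intro!: measure_pmf.integrable_const_bound[where B=1] abs_prob_diff_le_1)
  finally show "\<bar>measure_pmf.prob (bind_pmf p f) A - measure_pmf.prob (bind_pmf p g) A\<bar> \<le> e"
    by simp
qed

lemma tv_close_bernoulli:
  assumes "0 \<le> a" "a \<le> 1" "0 \<le> b" "b \<le> 1" "\<bar>a - b\<bar> \<le> e"
  shows "tv_close e (bind_pmf (bernoulli_pmf a) f) (bind_pmf (bernoulli_pmf b) f)"
  unfolding tv_close_def
proof
  fix A
  have "\<bar>measure_pmf.prob (bind_pmf (bernoulli_pmf a) f) A - measure_pmf.prob (bind_pmf (bernoulli_pmf b) f) A\<bar>
        = \<bar>a - b\<bar> * \<bar>measure_pmf.prob (f True) A - measure_pmf.prob (f False) A\<bar>"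
    using assms unfolding measure_bind_pmf by (simp add: abs_mult[symmetric] algebra_simps)
  also have "\<dots> \<le> \<bar>a - b\<bar>"
    by (intro mult_left_le abs_prob_diff_le_1) simp
  finally show "\<bar>measure_pmf.prob (bind_pmf (bernoulli_pmf a) f) A - measure_pmf.prob (bind_pmf (bernoulli_pmf b) f) A\<bar>
                \<le> e"
    using assms(5) by linarith
qed

text \<open>Hybrid argument: exchange the factors one at a time.\<close>
lemma tv_close_replicate:
  assumes "tv_close e p q"
  shows "tv_close (real n * e) (replicate_pmf n p) (replicate_pmf n q)"
proof (induction n)
  case 0
  then show ?case by (simp add: tv_close_def)
next
  case (Suc n)
  have "tv_close (real n * e) (replicate_pmf (Suc n) p) (p \<bind> (\<lambda>x. map_pmf ((#) x) (replicate_pmf n q)))"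
    unfolding replicate_pmf_Suc_map by (intro tv_close_bind tv_close_map Suc)
  moreover have "tv_close e (p \<bind> (\<lambda>x. map_pmf ((#) x) (replicate_pmf n q))) (replicate_pmf (Suc n) q)"
    unfolding replicate_pmf_Suc_map map_pmf_def
    by (subst (1 2) bind_commute_pmf) (intro tv_close_bind tv_close_map[unfolded map_pmf_def] assms)
  ultimately show ?case
    by (auto dest: tv_close_trans simp: algebra_simps)
qed

lemma bcast_tv_close:
  assumes "-1 \<le> t" "t \<le> 1" "-1 \<le> t'" "t' \<le> 1"
  shows "tv_close (real d * real k ^ d * (\<bar>t - t'\<bar> / 2)) (bcast k t d s) (bcast k t' d s)"
proof (induction d arbitrary: s)
  case 0
  then show ?case by (simp add: tv_close_def)
next
  case (Suc d)
  let ?\<delta> = "\<bar>t - t'\<bar> / 2"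
  let ?child = "\<lambda>t t'. bind_pmf (bernoulli_pmf ((1 + t) / 2)) (\<lambda>b. bcast k t' d (if b then s else \<not> s))"
  have half_diff: "\<bar>(1 + t) / 2 - (1 + t') / 2\<bar> = \<bar>(t - t') / 2\<bar>"
    by (rule arg_cong[where f = abs]) (simp add: field_simps)
  have "tv_close (real d * real k ^ d * ?\<delta>) (?child t t) (?child t t')"
    by (intro tv_close_bind Suc)
  moreover have "tv_close ?\<delta> (?child t t') (?child t' t')"
    using assms half_diff by (intro tv_close_bernoulli) auto
  ultimately have "tv_close (real d * real k ^ d * ?\<delta> + ?\<delta>) (?child t t) (?child t' t')"
    by (rule tv_close_trans)
  then have "tv_close (real k * (real d * real k ^ d * ?\<delta> + ?\<delta>)) (bcast k t (Suc d) s) (bcast k t' (Suc d) s)"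
    by (auto simp: seq_pmf_replicate intro: tv_close_map tv_close_replicate)
  moreover have "real k * ?\<delta> \<le> real k ^ Suc d * ?\<delta>"
    by (intro mult_right_mono) (cases k, auto simp: self_le_power)
  ultimately show ?case
    by (elim tv_close_mono) (simp add: algebra_simps)
qed

lemma broadcast_leaves_tv_close:
  "-1 \<le> t \<Longrightarrow> t \<le> 1 \<Longrightarrow> -1 \<le> t' \<Longrightarrow> t' \<le> 1 \<Longrightarrow>
     tv_close (real d * real k ^ d * (\<bar>t - t'\<bar> / 2)) (broadcast_leaves k t d) (broadcast_leaves k t' d)"
  unfolding broadcast_leaves_def by (intro tv_close_bind bcast_tv_close)

section \<open>Binary numerals\<close>

fun bits_val :: "bool list \<Rightarrow> nat" where
  "bits_val [] = 0"
| "bits_val (x # xs) = of_bool x * 2 ^ length xs + bits_val xs"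

fun to_bits :: "nat \<Rightarrow> nat \<Rightarrow> bool list" where
  "to_bits 0 a = []"
| "to_bits (Suc n) a = (2 ^ n \<le> a) # to_bits n (a mod 2 ^ n)"

lemma bits_val_less: "bits_val xs < 2 ^ length xs"
  by (induction xs) auto

lemma length_to_bits [simp]: "length (to_bits n a) = n"
  by (induction n arbitrary: a) auto

lemma bits_val_to_bits: "a < 2 ^ n \<Longrightarrow> bits_val (to_bits n a) = a"
  by (induction n arbitrary: a) (auto simp: le_mod_geq)

lemma to_bits_bits_val: "to_bits (length xs) (bits_val xs) = xs"
  using bits_val_less by (induction xs) (auto simp: not_le)

lemma bits_val_uniform: "map_pmf bits_val (uniform_bits n) = pmf_of_set {..<2 ^ n}"
proof -
  have "inj_on bits_val {xs. length xs = n}"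
    by (metis (mono_tags, lifting) inj_onI mem_Collect_eq to_bits_bits_val)
  moreover have "bits_val ` {xs. length xs = n} = {..<2 ^ n}"
  proof
    show "bits_val ` {xs. length xs = n} \<subseteq> {..<2 ^ n}"
      using bits_val_less by auto
    show "{..<2 ^ n} \<subseteq> bits_val ` {xs. length xs = n}"
    proof
      fix a :: nat
      assume "a \<in> {..<2 ^ n}"
      then have "a = bits_val (to_bits n a)"
        by (simp add: bits_val_to_bits)
      then show "a \<in> bits_val ` {xs. length xs = n}"
        by (metis (mono_tags) image_eqI length_to_bits mem_Collect_eq)
    qed
  qed
  moreover have "finite {xs :: bool list. length xs = n}"
    using finite_lists_length_eq[of "UNIV :: bool set" n] by simp
  moreover have "{xs :: bool list. length xs = n} \<noteq> {}"
    by (auto intro: exI[of _ "replicate n True"])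
  ultimately show ?thesis
    unfolding uniform_bits_def by (simp add: map_pmf_of_set_inj)
qed

lemma bits_val_less_bernoulli:
  assumes "A \<le> 2 ^ n"
  shows "map_pmf (\<lambda>xs. bits_val xs < A) (replicate_pmf n coin) = bernoulli_pmf (A / 2 ^ n)"
proof (rule bool_pmf_eqI)
  have "pmf (map_pmf (\<lambda>xs. bits_val xs < A) (replicate_pmf n coin)) True
        = measure_pmf.prob (map_pmf bits_val (uniform_bits n)) {..<A}"
    by (simp add: pmf_map uniform_bits_eq_replicate_coin vimage_def)
  also have "\<dots> = A / 2 ^ n"
  proof -
    have "{..<2 ^ n} \<inter> {..<A} = {..<A}"
      using assms by auto
    then show ?thesis
      by (subst bits_val_uniform, subst measure_pmf_of_set) (auto simp: lessThan_empty_iff)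
  qed
  finally show "pmf (map_pmf (\<lambda>xs. bits_val xs < A) (replicate_pmf n coin)) True
                = pmf (bernoulli_pmf (A / 2 ^ n)) True"
    using assms by simp
qed

lemma bits_val_less_iff:
  "length xs = length ys \<Longrightarrow>
     bits_val xs < bits_val ys \<longleftrightarrow> (\<exists>t < length ys. ys ! t \<and> \<not> xs ! t \<and> (\<forall>u<t. xs ! u = ys ! u))"
proof (induction ys arbitrary: xs)
  case (Cons y ys)
  then obtain x xs' where xs: "xs = x # xs'" "length xs' = length ys"
    by (cases xs) auto
  have "bits_val (x # xs') < bits_val (y # ys) \<longleftrightarrow> (y \<and> \<not> x) \<or> (x = y \<and> bits_val xs' < bits_val ys)"
    using bits_val_less[of xs'] bits_val_less[of ys] xs(2) by (cases x; cases y) auto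
  then show ?case
    unfolding xs(1) using Cons.IH[OF xs(2)]
    by (simp add: Ex_less_Suc2 All_less_Suc2) blast
qed simp

section \<open>Formulas as circuits\<close>

datatype formula = FVar nat | FNot formula | FAnd "formula list" | FOr "formula list"

fun eval_formula :: "bool list \<Rightarrow> formula \<Rightarrow> bool" where
  "eval_formula xs (FVar i) = xs ! i"
| "eval_formula xs (FNot f) = (\<not> eval_formula xs f)"
| "eval_formula xs (FAnd fs) = list_all (eval_formula xs) fs"
| "eval_formula xs (FOr fs) = list_ex (eval_formula xs) fs"

fun formula_depth :: "formula \<Rightarrow> nat" where
  "formula_depth (FVar i) = 0"
| "formula_depth (FNot f) = Suc (formula_depth f)"
| "formula_depth (FAnd fs) = Suc (foldr max (map formula_depth fs) 0)"
| "formula_depth (FOr fs) = Suc (foldr max (map formula_depth fs) 0)"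

fun vars_below :: "nat \<Rightarrow> formula \<Rightarrow> bool" where
  "vars_below m (FVar i) = (i < m)"
| "vars_below m (FNot f) = vars_below m f"
| "vars_below m (FAnd fs) = list_all (vars_below m) fs"
| "vars_below m (FOr fs) = list_all (vars_below m) fs"

fun gate_count :: "formula \<Rightarrow> nat" where
  "gate_count (FVar i) = 0"
| "gate_count (FNot f) = Suc (gate_count f)"
| "gate_count (FAnd fs) = Suc (sum_list (map gate_count fs))"
| "gate_count (FOr fs) = Suc (sum_list (map gate_count fs))"

text \<open>\<^term>\<open>compile f n\<close> returns the gates computing \<^term>\<open>f\<close> when the next free wire is
  \<^term>\<open>n\<close>, together with the wire that carries the value of \<^term>\<open>f\<close>.\<close>
fun compile :: "formula \<Rightarrow> nat \<Rightarrow> gate list \<times> nat"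
and compile_list :: "formula list \<Rightarrow> nat \<Rightarrow> gate list \<times> nat list" where
  "compile (FVar i) n = ([], i)"
| "compile (FNot f) n = (case compile f n of (gs, w) \<Rightarrow> (gs @ [NotG w], n + length gs))"
| "compile (FAnd fs) n = (case compile_list fs n of (gs, ws) \<Rightarrow> (gs @ [AndG ws], n + length gs))"
| "compile (FOr fs) n = (case compile_list fs n of (gs, ws) \<Rightarrow> (gs @ [OrG ws], n + length gs))"
| "compile_list [] n = ([], [])"
| "compile_list (f # fs) n = (case compile f n of (gs, w) \<Rightarrow>
     (case compile_list fs (n + length gs) of (gs', ws) \<Rightarrow> (gs @ gs', w # ws)))"

lemma length_compile:
  "length (fst (compile f n)) = gate_count f"
  "length (fst (compile_list fs n)) = sum_list (map gate_count fs)"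
  by (induction f n and fs n rule: compile_compile_list.induct) (auto split: prod.splits)

fun gates_wf :: "nat \<Rightarrow> gate list \<Rightarrow> bool" where
  "gates_wf n [] = True"
| "gates_wf n (g # gs) = ((\<forall>j \<in> set (gate_args g). j < n) \<and> gates_wf (Suc n) gs)"

lemma gates_wf_append: "gates_wf n (gs @ gs') \<longleftrightarrow> gates_wf n gs \<and> gates_wf (n + length gs) gs'"
  by (induction gs arbitrary: n) auto

lemma gates_wf_iff: "gates_wf n gs \<longleftrightarrow> (\<forall>i < length gs. \<forall>j \<in> set (gate_args (gs ! i)). j < n + i)"
proof (induction gs arbitrary: n)
  case (Cons g gs)
  then show ?case
    by (auto simp: All_less_Suc2)
qed simp

lemma compile_wf:
  "vars_below m f \<Longrightarrow> m \<le> n \<Longrightarrow>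
     gates_wf n (fst (compile f n)) \<and> snd (compile f n) < n + length (fst (compile f n))"
  "list_all (vars_below m) fs \<Longrightarrow> m \<le> n \<Longrightarrow>
     gates_wf n (fst (compile_list fs n)) \<and>
     (\<forall>w \<in> set (snd (compile_list fs n)). w < n + length (fst (compile_list fs n)))"
proof (induction f n and fs n rule: compile_compile_list.induct)
  case (6 f fs n)
  then show ?case
    by (fastforce simp: gates_wf_append split: prod.splits)
qed (auto simp: gates_wf_append split: prod.splits)

lemma eval_gates_append: "eval_gates (gs @ gs') vs = eval_gates gs' (eval_gates gs vs)"
  by (induction gs arbitrary: vs) auto

lemma length_eval_gates [simp]: "length (eval_gates gs vs) = length vs + length gs"
  by (induction gs arbitrary: vs) auto

lemma nth_eval_gates: "i < length vs \<Longrightarrow> eval_gates gs vs ! i = vs ! i"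
  by (induction gs arbitrary: vs) (auto simp: nth_append)

lemma eval_gates_snoc:
  "eval_gates (gs @ [g]) vs = eval_gates gs vs @ [gate_val g (eval_gates gs vs)]"
  by (simp add: eval_gates_append)

lemma gate_val_AndG: "gate_val (AndG ws) vs = list_all id (map ((!) vs) ws)"
  by (simp add: list_all_iff)

lemma gate_val_OrG: "gate_val (OrG ws) vs = list_ex id (map ((!) vs) ws)"
  by (simp add: list_ex_iff)

lemma compile_eval:
  "vars_below m f \<Longrightarrow> m \<le> n \<Longrightarrow> length vs = n \<Longrightarrow> \<forall>i<m. vs ! i = xs ! i \<Longrightarrow>
     eval_gates (fst (compile f n)) vs ! snd (compile f n) = eval_formula xs f"
  "list_all (vars_below m) fs \<Longrightarrow> m \<le> n \<Longrightarrow> length vs = n \<Longrightarrow> \<forall>i<m. vs ! i = xs ! i \<Longrightarrow>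
     map ((!) (eval_gates (fst (compile_list fs n)) vs)) (snd (compile_list fs n)) = map (eval_formula xs) fs"
proof (induction f n and fs n arbitrary: vs and vs rule: compile_compile_list.induct)
  case (2 f n)
  then show ?case
    using "2.IH"[of vs] by (auto simp: eval_gates_snoc nth_append split: prod.splits)
next
  case (3 fs n)
  obtain gs ws where c: "compile_list fs n = (gs, ws)"
    by fastforce
  with 3 have "map ((!) (eval_gates gs vs)) ws = map (eval_formula xs) fs"
    by simp
  moreover have "eval_gates (gs @ [AndG ws]) vs ! (n + length gs) = list_all id (map ((!) (eval_gates gs vs)) ws)"
    using 3 by (simp add: eval_gates_snoc nth_append gate_val_AndG del: gate_val.simps)
  ultimately show ?case
    using c by (simp add: list.pred_map list_ex_iff)
next
  case (4 fs n)
  obtain gs ws where c: "compile_list fs n = (gs, ws)"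
    by fastforce
  with 4 have "map ((!) (eval_gates gs vs)) ws = map (eval_formula xs) fs"
    by simp
  moreover have "eval_gates (gs @ [OrG ws]) vs ! (n + length gs) = list_ex id (map ((!) (eval_gates gs vs)) ws)"
    using 4 by (simp add: eval_gates_snoc nth_append gate_val_OrG del: gate_val.simps)
  ultimately show ?case
    using c by (simp add: list.pred_map list_ex_iff)
next
  case (6 f fs n)
  obtain gs w where c1: "compile f n = (gs, w)"
    by fastforce
  obtain gs' ws where c2: "compile_list fs (n + length gs) = (gs', ws)"
    by fastforce
  have "w < length (eval_gates gs vs)"
    using compile_wf(1)[of m f n] 6 c1 by simp
  moreover have "eval_gates gs vs ! w = eval_formula xs f"
    using 6 c1 by simp
  moreover have "map ((!) (eval_gates gs' (eval_gates gs vs))) ws = map (eval_formula xs) fs"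
    using "6.IH"(2)[OF c1[symmetric], of "eval_gates gs vs"] 6 c2 by (simp add: nth_eval_gates)
  ultimately show ?case
    using c1 c2 by (simp add: eval_gates_append nth_eval_gates)
qed auto

lemma gate_depths_append: "gate_depths (gs @ gs') ds = gate_depths gs' (gate_depths gs ds)"
  by (induction gs arbitrary: ds) auto

lemma length_gate_depths [simp]: "length (gate_depths gs ds) = length ds + length gs"
  by (induction gs arbitrary: ds) auto

lemma nth_gate_depths: "i < length ds \<Longrightarrow> gate_depths gs ds ! i = ds ! i"
  by (induction gs arbitrary: ds) (auto simp: nth_append)

lemma gate_depths_snoc:
  "gate_depths (gs @ [g]) ds
     = gate_depths gs ds @ [Suc (foldr max (map ((!) (gate_depths gs ds)) (gate_args g)) 0)]"
  by (simp add: gate_depths_append)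

lemma foldr_max_le_iff: "foldr max xs (a::nat) \<le> D \<longleftrightarrow> a \<le> D \<and> (\<forall>x \<in> set xs. x \<le> D)"
  by (induction xs) auto

lemma compile_depth:
  "vars_below m f \<Longrightarrow> m \<le> n \<Longrightarrow> length ds = n \<Longrightarrow> \<forall>i<m. ds ! i = 0 \<Longrightarrow>
     gate_depths (fst (compile f n)) ds ! snd (compile f n) = formula_depth f \<and>
     (\<forall>i \<in> {n..<n + length (fst (compile f n))}. gate_depths (fst (compile f n)) ds ! i \<le> formula_depth f)"
  "list_all (vars_below m) fs \<Longrightarrow> m \<le> n \<Longrightarrow> length ds = n \<Longrightarrow> \<forall>i<m. ds ! i = 0 \<Longrightarrow>
     map ((!) (gate_depths (fst (compile_list fs n)) ds)) (snd (compile_list fs n)) = map formula_depth fs \<and>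
     (\<forall>i \<in> {n..<n + length (fst (compile_list fs n))}.
        gate_depths (fst (compile_list fs n)) ds ! i \<le> foldr max (map formula_depth fs) 0)"
proof (induction f n and fs n arbitrary: ds and ds rule: compile_compile_list.induct)
  case (2 f n)
  then show ?case
    using "2.IH"[of ds] by (auto simp: gate_depths_snoc nth_append le_SucI split: prod.splits)
next
  case (3 fs n)
  then show ?case
    using "3.IH"[of ds] by (auto simp: gate_depths_snoc nth_append le_SucI split: prod.splits)
next
  case (4 fs n)
  then show ?case
    using "4.IH"[of ds] by (auto simp: gate_depths_snoc nth_append le_SucI split: prod.splits)
next
  case (6 f fs n)
  obtain gs w where c1: "compile f n = (gs, w)"
    by fastforce
  obtain gs' ws where c2: "compile_list fs (n + length gs) = (gs', ws)"
    by fastforce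
  have IH1: "gate_depths gs ds ! w = formula_depth f"
    "\<forall>i \<in> {n..<n + length gs}. gate_depths gs ds ! i \<le> formula_depth f"
    using 6 c1 by simp_all
  have IH2: "map ((!) (gate_depths gs' (gate_depths gs ds))) ws = map formula_depth fs"
    "\<forall>i \<in> {n + length gs..<n + length gs + length gs'}.
       gate_depths gs' (gate_depths gs ds) ! i \<le> foldr max (map formula_depth fs) 0"
    using "6.IH"(2)[OF c1[symmetric], of "gate_depths gs ds"] 6 c2 by (simp_all add: nth_gate_depths)
  have "w < length (gate_depths gs ds)"
    using compile_wf(1)[of m f n] 6 c1 by simp
  moreover have "gate_depths gs' (gate_depths gs ds) ! i \<le> max (formula_depth f) (foldr max (map formula_depth fs) 0)"
    if "i \<in> {n..<n + length gs + length gs'}" for i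
  proof (cases "i < n + length gs")
    case True
    then show ?thesis
      using that IH1(2) 6(5) by (simp add: nth_gate_depths max.coboundedI1)
  next
    case False
    then show ?thesis
      using that IH2(2) by (simp add: max.coboundedI2)
  qed
  ultimately show ?case
    using IH1(1) IH2(1) c1 c2 by (simp add: gate_depths_append nth_gate_depths)
qed auto

definition circuit_of_formulas :: "nat \<Rightarrow> formula list \<Rightarrow> circuit" where
  "circuit_of_formulas m fs =
     \<lparr>c_inputs = m, c_gates = fst (compile_list fs m), c_outputs = snd (compile_list fs m)\<rparr>"

lemma wf_circuit_of_formulas:
  "list_all (vars_below m) fs \<Longrightarrow> wf_circuit (circuit_of_formulas m fs)"
  using compile_wf(2)[of m fs m] by (simp add: wf_circuit_def circuit_of_formulas_def gates_wf_iff)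

lemma circ_size_circuit_of_formulas:
  "circ_size (circuit_of_formulas m fs) = m + sum_list (map gate_count fs)"
  by (simp add: circ_size_def circuit_of_formulas_def length_compile)

lemma circ_eval_circuit_of_formulas:
  "list_all (vars_below m) fs \<Longrightarrow> length xs = m \<Longrightarrow>
     circ_eval (circuit_of_formulas m fs) xs = map (eval_formula xs) fs"
  using compile_eval(2)[of m fs m xs xs] by (simp add: circ_eval_def circuit_of_formulas_def)

lemma circ_depth_circuit_of_formulas:
  assumes "list_all (vars_below m) fs"
  shows "circ_depth (circuit_of_formulas m fs) \<le> foldr max (map formula_depth fs) 0"
proof -
  let ?ds = "gate_depths (fst (compile_list fs m)) (replicate m 0)"
  have "?ds ! i \<le> foldr max (map formula_depth fs) 0" if "i < length ?ds" for i
  proof (cases "i < m")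
    case True
    then show ?thesis
      by (simp add: nth_gate_depths)
  next
    case False
    then show ?thesis
      using compile_depth(2)[OF assms le_refl, of "replicate m 0"] that by simp
  qed
  then show ?thesis
    by (auto simp: circ_depth_def circuit_of_formulas_def foldr_max_le_iff in_set_conv_nth)
qed

definition literal_xor :: "bool \<Rightarrow> nat \<Rightarrow> formula" where
  "literal_xor c i = (if c then FNot (FVar i) else FVar i)"

lemma eval_literal_xor [simp]: "eval_formula ys (literal_xor c i) = (ys ! i \<noteq> c)"
  by (simp add: literal_xor_def)

lemma sum_list_map_le: "(\<And>x. x \<in> set xs \<Longrightarrow> f x \<le> c) \<Longrightarrow> sum_list (map f xs) \<le> length xs * (c::nat)"
  using sum_list_mono[of xs f "\<lambda>_. c"] by (simp add: sum_list_triv)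

lemma gate_count_FAnd_le: "\<forall>f \<in> set fs. gate_count f \<le> c \<Longrightarrow> gate_count (FAnd fs) \<le> Suc (length fs * c)"
  using sum_list_map_le[of fs gate_count c] by simp

lemma gate_count_FOr_le: "\<forall>f \<in> set fs. gate_count f \<le> c \<Longrightarrow> gate_count (FOr fs) \<le> Suc (length fs * c)"
  using sum_list_map_le[of fs gate_count c] by simp

section \<open>The generator\<close>

lemma foldl_flips:
  "\<forall>r \<in> set rs. P r \<Longrightarrow>
     foldl (\<lambda>s r. if P r then s \<noteq> c else f r) s rs = (s \<noteq> (c \<and> odd (length rs)))"
  by (induction rs arbitrary: s) auto

lemma foldl_reset_or_flip:
  "foldl (\<lambda>s r. if P r then s \<noteq> c else f r) s rs =
     ((\<exists>i < length rs. \<not> P (rs ! i) \<and> (\<forall>j. i < j \<and> j < length rs \<longrightarrow> P (rs ! j))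
          \<and> f (rs ! i) \<noteq> (c \<and> odd (length rs - 1 - i)))
      \<or> ((\<forall>j < length rs. P (rs ! j)) \<and> s \<noteq> (c \<and> odd (length rs))))"
  (is "?fold rs = ?flat")
proof (cases "\<forall>j < length rs. P (rs ! j)")
  case True
  then show ?thesis
    by (auto simp: foldl_flips all_set_conv_all_nth)
next
  case False
  define i where "i = Max {j. j < length rs \<and> \<not> P (rs ! j)}"
  have "i \<in> {j. j < length rs \<and> \<not> P (rs ! j)}"
    unfolding i_def using False by (intro Max_in) auto
  then have i: "i < length rs" "\<not> P (rs ! i)"
    by auto
  have later: "P (rs ! j)" if "i < j" "j < length rs" for j
    using Max_ge[of "{j. j < length rs \<and> \<not> P (rs ! j)}" j] that unfolding i_def[symmetric]
    by fastforce
  have "?fold rs = ?fold (take i rs @ rs ! i # drop (Suc i) rs)"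
    using i(1) by (simp add: id_take_nth_drop[symmetric])
  also have "\<dots> = (f (rs ! i) \<noteq> (c \<and> odd (length rs - 1 - i)))"
    using i later by (simp add: foldl_flips all_set_conv_all_nth)
  also have "\<dots> = ?flat"
    using i later False by (auto dest: not_less_iff_gr_or_eq[THEN iffD1])
  finally show ?thesis .
qed

lemma drop_concat_equal_length:
  "\<forall>xs \<in> set xss. length xs = n \<Longrightarrow> drop (j * n) (concat xss) = concat (drop j xss)"
proof (induction xss arbitrary: j)
  case (Cons xs xss)
  then show ?case
    by (cases j) (simp_all add: drop_append)
qed simp

lemma less_power_base:
  fixes k d :: nat
  assumes "2 \<le> k"
  shows "d < k ^ d"
proof -
  have "d < 2 ^ d" "(2::nat) ^ d \<le> k ^ d"
    using assms by (simp_all add: less_exp power_mono)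
  then show ?thesis
    by linarith
qed

lemma square_div_two_power_le:
  assumes "x + 2 * real n \<le> real m"
  shows "real n * real n / 2 ^ m \<le> 2 powr (- x)"
proof -
  have "real n \<le> 2 powr real n"
    using less_exp[of n] by (simp add: powr_realpow)
  then have "real n * real n \<le> 2 powr (2 * real n)"
    using mult_mono[of "real n" "2 powr real n" "real n" "2 powr real n"]
    by (simp add: powr_add[symmetric])
  then have "real n * real n / 2 ^ m \<le> 2 powr (2 * real n) / 2 powr real m"
    by (simp add: powr_realpow divide_right_mono)
  also have "\<dots> \<le> 2 powr (- x)"
    using assms by (simp add: powr_diff[symmetric])
  finally show ?thesis .
qed

locale dyadic_generator =
  fixes k :: nat and neg :: bool and b A :: nat
  assumes threshold_le: "A \<le> 2 ^ b"
begin

definition correlation :: real where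
  "correlation = (if neg then - (A / 2 ^ b) else A / 2 ^ b)"

lemma threshold_ratio_bounds: "0 \<le> A / 2 ^ b" "A / 2 ^ b \<le> (1::real)"
  using threshold_le by (simp_all add: field_simps)

lemma correlation_bounds: "-1 \<le> correlation" "correlation \<le> 1"
  unfolding correlation_def using threshold_ratio_bounds by (cases neg; simp only: if_True if_False; linarith)+

text \<open>An edge block consists of a fresh uniform spin followed by \<^term>\<open>b\<close> bits that are compared
  with the threshold \<^term>\<open>A\<close>.\<close>
definition keep :: "bool list \<Rightarrow> bool" where
  "keep r \<longleftrightarrow> bits_val (tl r) < A"

definition child_spin :: "bool \<Rightarrow> bool list \<Rightarrow> bool" where
  "child_spin s r = (if keep r then s \<noteq> neg else hd r)"

lemma child_spin_distribution:
  "map_pmf (child_spin s) (replicate_pmf (Suc b) coin)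
     = map_pmf (\<lambda>c. if c then s else \<not> s) (bernoulli_pmf ((1 + correlation) / 2))"
proof -
  let ?q = "A / 2 ^ b"
  have "map_pmf (child_spin s) (replicate_pmf (Suc b) coin)
        = bind_pmf coin (\<lambda>r. map_pmf (\<lambda>K. if K then s \<noteq> neg else r)
            (map_pmf (\<lambda>xs. bits_val xs < A) (replicate_pmf b coin)))"
    unfolding replicate_pmf_Suc_map map_bind_pmf pmf.map_comp o_def
    by (simp add: child_spin_def keep_def del: replicate_pmf.simps)
  also have "\<dots> = bind_pmf coin (\<lambda>r. map_pmf (\<lambda>K. if K then s \<noteq> neg else r) (bernoulli_pmf ?q))"
    by (simp add: bits_val_less_bernoulli threshold_le)
  also have "\<dots> = map_pmf (\<lambda>c. if c then s else \<not> s) (bernoulli_pmf ((1 + correlation) / 2))"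
    unfolding map_pmf_def correlation_def using threshold_ratio_bounds correlation_bounds[unfolded correlation_def]
    by (intro bool_pmf_eqI) (cases s; cases neg; simp add: pmf_bind pmf_return field_simps)
  finally show ?thesis .
qed

fun tree_bits :: "nat \<Rightarrow> nat" where
  "tree_bits 0 = 0"
| "tree_bits (Suc d) = k * (Suc b + tree_bits d)"

text \<open>The random bits of a tree of depth \<^term>\<open>Suc d\<close> consist of \<^term>\<open>k\<close> consecutive blocks,
  one per child of the root: the \<^term>\<open>Suc b\<close> bits of the edge to that child, followed by the bits
  of the child's subtree. A leaf path lists the offsets of the edge blocks from the root to the leaf.\<close>
fun leaf_paths :: "nat \<Rightarrow> nat list list" where
  "leaf_paths 0 = [[]]"
| "leaf_paths (Suc d) = concat (map (\<lambda>j. map (\<lambda>p. j * (Suc b + tree_bits d) #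
       map ((+) (j * (Suc b + tree_bits d) + Suc b)) p) (leaf_paths d)) [0..<k])"

definition edge_block :: "bool list \<Rightarrow> nat \<Rightarrow> bool list" where
  "edge_block xs z = take (Suc b) (drop z xs)"

definition generate :: "nat \<Rightarrow> bool \<Rightarrow> bool list \<Rightarrow> bool list" where
  "generate d s xs = map (\<lambda>p. foldl child_spin s (map (edge_block xs) p)) (leaf_paths d)"

lemma leaf_paths_bounded:
  "p \<in> set (leaf_paths d) \<Longrightarrow> (\<forall>z \<in> set p. z + Suc b \<le> tree_bits d) \<and> length p = d"
proof (induction d arbitrary: p)
  case (Suc d)
  then obtain j p' where j: "j < k" and p': "p' \<in> set (leaf_paths d)"
    and p: "p = j * (Suc b + tree_bits d) # map ((+) (j * (Suc b + tree_bits d) + Suc b)) p'"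
    by auto
  have "j * (Suc b + tree_bits d) + (Suc b + tree_bits d) \<le> k * (Suc b + tree_bits d)"
    using j by (metis add.commute mult_Suc mult_le_mono1 Suc_leI)
  then show ?case
    using Suc.IH[OF p'] p by auto
qed simp

lemma length_leaf_paths: "length (leaf_paths d) = k ^ d"
  by (induction d) (simp_all add: length_concat o_def sum_list_triv)

lemma edge_block_concat:
  assumes "\<forall>xs \<in> set xss. length xs = n" "j < length xss" "i + Suc b \<le> n"
  shows "edge_block (concat xss) (j * n + i) = edge_block (xss ! j) i"
proof -
  have "drop (j * n + i) (concat xss) = drop i (concat (xss ! j # drop (Suc j) xss))"
    using assms(1,2) by (simp add: drop_drop[symmetric] add.commute drop_concat_equal_length Cons_nth_drop_Suc)
  also have "\<dots> = drop i (xss ! j) @ concat (drop (Suc j) xss)"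
    using assms nth_mem[OF assms(2)] by simp
  finally show ?thesis
    using assms nth_mem[OF assms(2)] by (simp add: edge_block_def)
qed

lemma generate_Suc:
  assumes "length blks = k" "\<forall>blk \<in> set blks. length blk = Suc b + tree_bits d"
  shows "generate (Suc d) s (concat blks)
         = concat (map (\<lambda>blk. generate d (child_spin s (take (Suc b) blk)) (drop (Suc b) blk)) blks)"
proof -
  let ?B = "Suc b + tree_bits d"
  have "edge_block (concat blks) (j * ?B + Suc b + z) = edge_block (drop (Suc b) (blks ! j)) z"
    if "j < k" "z + Suc b \<le> tree_bits d" for j z
    using edge_block_concat[OF assms(2), of j "Suc b + z"] that assms(1)
    by (simp add: edge_block_def add_ac)
  then have rest: "map (edge_block (concat blks)) (map ((+) (j * ?B + Suc b)) p)
                   = map (edge_block (drop (Suc b) (blks ! j))) p"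
    if "j < k" "p \<in> set (leaf_paths d)" for j p
    using leaf_paths_bounded[OF that(2)] that(1) by simp
  have first: "edge_block (concat blks) (j * ?B) = take (Suc b) (blks ! j)" if "j < k" for j
    using edge_block_concat[OF assms(2), of j 0] that assms(1) by (simp add: edge_block_def)
  have "generate (Suc d) s (concat blks)
        = concat (map (\<lambda>j. generate d (child_spin s (take (Suc b) (blks ! j))) (drop (Suc b) (blks ! j))) [0..<k])"
    unfolding generate_def leaf_paths.simps map_concat map_map o_def
    by (intro arg_cong[where f = concat] map_cong refl)
       (simp only: list.map foldl_Cons first rest atLeastLessThan_iff set_upt)
  also have "\<dots> = concat (map (\<lambda>blk. generate d (child_spin s (take (Suc b) blk)) (drop (Suc b) blk)) blks)"
    using assms(1) by (intro arg_cong[where f = concat] nth_equalityI) simp_all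
  finally show ?thesis .
qed

lemma generate_Suc_distribution:
  "map_pmf (generate (Suc d) s) (replicate_pmf (tree_bits (Suc d)) coin)
   = map_pmf concat (replicate_pmf k (map_pmf (\<lambda>blk. generate d (child_spin s (take (Suc b) blk)) (drop (Suc b) blk))
       (replicate_pmf (Suc b + tree_bits d) coin)))"
proof -
  have "map_pmf (generate (Suc d) s) (replicate_pmf (tree_bits (Suc d)) coin)
        = map_pmf (generate (Suc d) s \<circ> concat) (replicate_pmf k (replicate_pmf (Suc b + tree_bits d) coin))"
    by (simp only: tree_bits.simps replicate_pmf_mult pmf.map_comp)
  also have "\<dots> = map_pmf (\<lambda>blks. concat (map (\<lambda>blk. generate d (child_spin s (take (Suc b) blk)) (drop (Suc b) blk)) blks))
                 (replicate_pmf k (replicate_pmf (Suc b + tree_bits d) coin))"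
  proof (rule map_pmf_cong[OF refl])
    fix blks
    assume "blks \<in> set_pmf (replicate_pmf k (replicate_pmf (Suc b + tree_bits d) coin))"
    then have "length blks = k" "\<forall>blk \<in> set blks. length blk = Suc b + tree_bits d"
      by (auto simp: set_replicate_pmf set_pmf_replicate_coin simp del: replicate_pmf.simps)
    then show "(generate (Suc d) s \<circ> concat) blks
               = concat (map (\<lambda>blk. generate d (child_spin s (take (Suc b) blk)) (drop (Suc b) blk)) blks)"
      by (simp add: generate_Suc)
  qed
  also have "\<dots> = map_pmf concat (replicate_pmf k (map_pmf (\<lambda>blk. generate d (child_spin s (take (Suc b) blk)) (drop (Suc b) blk))
                     (replicate_pmf (Suc b + tree_bits d) coin)))"
    by (simp only: replicate_pmf_map pmf.map_comp o_def)
  finally show ?thesis .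
qed

lemma generate_distribution:
  "map_pmf (generate d s) (replicate_pmf (tree_bits d) coin) = bcast k correlation d s"
proof (induction d arbitrary: s)
  case 0
  then show ?case
    by (simp add: generate_def map_pmf_const)
next
  case (Suc d)
  have "map_pmf (\<lambda>blk. generate d (child_spin s (take (Suc b) blk)) (drop (Suc b) blk)) (replicate_pmf (Suc b + tree_bits d) coin)
        = bind_pmf (replicate_pmf (Suc b) coin) (\<lambda>xs. map_pmf (\<lambda>ys.
            generate d (child_spin s (take (Suc b) (xs @ ys))) (drop (Suc b) (xs @ ys))) (replicate_pmf (tree_bits d) coin))"
    unfolding replicate_pmf_distrib by (simp add: map_bind_pmf map_pmf_def[symmetric] pmf.map_comp o_def)
  also have "\<dots> = bind_pmf (replicate_pmf (Suc b) coin)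
                     (\<lambda>xs. map_pmf (generate d (child_spin s xs)) (replicate_pmf (tree_bits d) coin))"
    by (intro bind_pmf_cong refl) (simp add: set_pmf_replicate_coin del: replicate_pmf.simps)
  also have "\<dots> = bind_pmf (map_pmf (child_spin s) (replicate_pmf (Suc b) coin)) (bcast k correlation d)"
    by (simp add: Suc.IH bind_map_pmf del: replicate_pmf.simps)
  also have "\<dots> = bind_pmf (bernoulli_pmf ((1 + correlation) / 2)) (\<lambda>c. bcast k correlation d (if c then s else \<not> s))"
    unfolding child_spin_distribution by (simp add: bind_map_pmf)
  finally have subtree: "map_pmf (\<lambda>blk. generate d (child_spin s (take (Suc b) blk)) (drop (Suc b) blk))
      (replicate_pmf (Suc b + tree_bits d) coin)
    = bind_pmf (bernoulli_pmf ((1 + correlation) / 2)) (\<lambda>c. bcast k correlation d (if c then s else \<not> s))" .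
  show ?case
    by (simp only: generate_Suc_distribution subtree bcast.simps seq_pmf_replicate)
qed

definition keep_formula :: "nat \<Rightarrow> formula" where
  "keep_formula i = (if A = 2 ^ b then FAnd [] else
     FOr (map (\<lambda>t. FAnd (FNot (FVar (Suc i + t)) # map (\<lambda>u. literal_xor (\<not> to_bits b A ! u) (Suc i + u)) [0..<t]))
       (filter ((!) (to_bits b A)) [0..<b])))"

lemma eval_keep_formula:
  assumes "i + Suc b \<le> length ys"
  shows "eval_formula ys (keep_formula i) = keep (edge_block ys i)"
proof -
  define kb where "kb = tl (edge_block ys i)"
  have kb: "length kb = b" "\<forall>t < b. kb ! t = ys ! (Suc i + t)"
    using assms by (auto simp: kb_def edge_block_def tl_take tl_drop drop_Suc[symmetric])
  show ?thesis
  proof (cases "A = 2 ^ b")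
    case True
    then show ?thesis
      using bits_val_less[of kb] kb(1) unfolding keep_formula_def keep_def kb_def[symmetric] by simp
  next
    case False
    then have "A < 2 ^ b"
      using threshold_le by simp
    then have "keep (edge_block ys i) \<longleftrightarrow> bits_val kb < bits_val (to_bits b A)"
      by (simp add: keep_def kb_def bits_val_to_bits)
    also have "\<dots> \<longleftrightarrow> (\<exists>t < b. to_bits b A ! t \<and> \<not> kb ! t \<and> (\<forall>u<t. kb ! u = to_bits b A ! u))"
      using kb(1) by (simp add: bits_val_less_iff)
    also have "\<dots> \<longleftrightarrow> eval_formula ys (keep_formula i)"
      using False kb(2) by (auto simp: keep_formula_def list_ex_iff list_all_iff)
    finally show ?thesis ..
  qed
qed

lemma keep_formula_depth: "formula_depth (keep_formula i) \<le> 3"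
  by (simp add: keep_formula_def literal_xor_def foldr_max_le_iff eval_nat_numeral)

lemma vars_below_keep_formula: "i + Suc b \<le> m \<Longrightarrow> vars_below m (keep_formula i)"
  by (auto simp: keep_formula_def literal_xor_def list_all_iff)

lemma gate_count_keep_formula: "gate_count (keep_formula i) \<le> (Suc b)\<^sup>2"
proof (cases "A = 2 ^ b")
  case False
  let ?conj = "\<lambda>t. FAnd (FNot (FVar (Suc i + t)) # map (\<lambda>u. literal_xor (\<not> to_bits b A ! u) (Suc i + u)) [0..<t])"
  have "gate_count (?conj t) \<le> Suc b" if "t < b" for t
    using that gate_count_FAnd_le[of "FNot (FVar (Suc i + t)) # map (\<lambda>u. literal_xor (\<not> to_bits b A ! u) (Suc i + u)) [0..<t]" 1]
    by (fastforce simp: literal_xor_def)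
  then have "gate_count (keep_formula i) \<le> Suc (length (map ?conj (filter ((!) (to_bits b A)) [0..<b])) * Suc b)"
    unfolding keep_formula_def using False by (simp only: if_False) (rule gate_count_FOr_le, auto)
  also have "\<dots> \<le> Suc (b * Suc b)"
    using mult_le_mono1[OF length_filter_le[of "(!) (to_bits b A)" "[0..<b]"], of "Suc b"] by simp
  finally show ?thesis
    by (simp add: power2_eq_square)
qed (unfold keep_formula_def, simp)

text \<open>The leaf formula for the edge blocks at input positions \<^term>\<open>P\<close>: the spin at the leaf is the
  fresh bit of the last edge that does not keep its parent's spin, flipped once for every later edge
  when \<^term>\<open>neg\<close>; if all edges keep, it is the root spin at input position 0, flipped along every edge.\<close>
definition leaf_formula :: "nat list \<Rightarrow> formula" where
  "leaf_formula P = FOr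
     (map (\<lambda>i. FAnd (FNot (keep_formula (P ! i)) # map (\<lambda>j. keep_formula (P ! j)) [Suc i..<length P]
                     @ [literal_xor (neg \<and> odd (length P - 1 - i)) (P ! i)]))
        [0..<length P]
      @ [FAnd (map keep_formula P @ [literal_xor (neg \<and> odd (length P)) 0])])"

lemma eval_leaf_formula:
  assumes "\<forall>z \<in> set P. z + Suc b \<le> length ys"
  shows "eval_formula ys (leaf_formula P) = foldl child_spin (ys ! 0) (map (edge_block ys) P)"
proof -
  have keep_eval: "eval_formula ys (keep_formula z) = keep (edge_block ys z)" if "z \<in> set P" for z
    using assms that by (simp add: eval_keep_formula)
  have hd_block: "hd (edge_block ys (P ! i)) = ys ! (P ! i)" if "i < length P" for i
    using assms that nth_mem[OF that] by (fastforce simp: edge_block_def hd_drop_conv_nth)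
  have ex: "(\<exists>x \<in> {0..<length P}. Q x) = (\<exists>x < length P. Q x)" for Q
    by auto
  have all: "(\<forall>x \<in> {Suc i..<length P}. Q x) = (\<forall>j. i < j \<and> j < length P \<longrightarrow> Q j)" for Q i
    by auto
  have "child_spin = (\<lambda>s r. if keep r then s \<noteq> neg else hd r)"
    by (simp add: child_spin_def fun_eq_iff)
  then have "foldl child_spin (ys ! 0) (map (edge_block ys) P)
    = ((\<exists>i < length P. \<not> keep (map (edge_block ys) P ! i)
          \<and> (\<forall>j. i < j \<and> j < length P \<longrightarrow> keep (map (edge_block ys) P ! j))
          \<and> hd (map (edge_block ys) P ! i) \<noteq> (neg \<and> odd (length P - 1 - i)))
       \<or> ((\<forall>j < length P. keep (map (edge_block ys) P ! j)) \<and> ys ! 0 \<noteq> (neg \<and> odd (length P))))"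
    by (simp only: foldl_reset_or_flip length_map)
  also have "\<dots> = eval_formula ys (leaf_formula P)"
    using keep_eval hd_block
    by (simp add: leaf_formula_def list_ex_iff list_all_iff all_set_conv_all_nth ex all cong: conj_cong)
       blast
  finally show ?thesis ..
qed

lemma leaf_formula_depth: "formula_depth (leaf_formula P) \<le> 6"
  using keep_formula_depth
  by (auto simp: leaf_formula_def literal_xor_def foldr_max_le_iff eval_nat_numeral le_SucI)

lemma vars_below_leaf_formula:
  "\<forall>z \<in> set P. z + Suc b \<le> m \<Longrightarrow> 0 < m \<Longrightarrow> vars_below m (leaf_formula P)"
  using vars_below_keep_formula
  by (fastforce simp: leaf_formula_def literal_xor_def list_all_iff dest: nth_mem)

lemma gate_count_leaf_formula:
  "gate_count (leaf_formula P) \<le> Suc (Suc (length P) * Suc (Suc (length P) * Suc ((Suc b)\<^sup>2)))"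
proof -
  let ?S = "Suc ((Suc b)\<^sup>2)" and ?n = "length P"
  have keep: "gate_count (keep_formula z) \<le> ?S" "gate_count (FNot (keep_formula z)) \<le> ?S" for z
    using gate_count_keep_formula[of z] by simp_all
  have lit: "gate_count (literal_xor c z) \<le> ?S" for c z
    by (simp add: literal_xor_def)
  have conj_bound: "gate_count (FAnd fs) \<le> Suc (Suc ?n * ?S)"
    if "\<forall>f \<in> set fs. gate_count f \<le> ?S" "length fs \<le> Suc ?n" for fs
    using gate_count_FAnd_le[OF that(1)] mult_le_mono1[OF that(2), of ?S] by linarith
  define fs where "fs = map (\<lambda>i. FAnd (FNot (keep_formula (P ! i)) # map (\<lambda>j. keep_formula (P ! j)) [Suc i..<?n]
                     @ [literal_xor (neg \<and> odd (?n - 1 - i)) (P ! i)])) [0..<?n]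
                  @ [FAnd (map keep_formula P @ [literal_xor (neg \<and> odd ?n) 0])]"
  have "gate_count f \<le> Suc (Suc ?n * ?S)" if "f \<in> set fs" for f
  proof -
    from that[unfolded fs_def] consider
      (reset) i where "i < ?n" "f = FAnd (FNot (keep_formula (P ! i)) # map (\<lambda>j. keep_formula (P ! j)) [Suc i..<?n]
                                      @ [literal_xor (neg \<and> odd (?n - 1 - i)) (P ! i)])"
    | (root) "f = FAnd (map keep_formula P @ [literal_xor (neg \<and> odd ?n) 0])"
      by auto
    then show ?thesis
    proof cases
      case reset
      show ?thesis
        unfolding reset(2) by (rule conj_bound) (use reset(1) keep lit in auto)
    next
      case root
      show ?thesis
        unfolding root by (rule conj_bound) (use keep lit in auto)
    qed
  qed
  then have "gate_count (FOr fs) \<le> Suc (length fs * Suc (Suc ?n * ?S))"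
    by (intro gate_count_FOr_le) blast
  moreover have "leaf_formula P = FOr fs" "length fs = Suc ?n"
    by (simp_all add: leaf_formula_def fs_def)
  ultimately show ?thesis
    by simp
qed

lemma tree_bits_le: "1 \<le> k \<Longrightarrow> tree_bits d \<le> Suc b * d * k ^ d"
proof (induction d)
  case (Suc d)
  have "k \<le> k ^ Suc d"
    using Suc.prems by (simp add: self_le_power)
  have "tree_bits (Suc d) = Suc b * k + k * tree_bits d"
    by (simp add: algebra_simps)
  also have "\<dots> \<le> Suc b * k ^ Suc d + k * (Suc b * d * k ^ d)"
    using Suc \<open>k \<le> k ^ Suc d\<close> by (intro add_mono mult_le_mono) auto
  also have "\<dots> = Suc b * Suc d * k ^ Suc d"
    by (simp add: algebra_simps)
  finally show ?case .
qed simp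

definition generator_circuit :: "nat \<Rightarrow> circuit" where
  "generator_circuit d = circuit_of_formulas (Suc (tree_bits d)) (map (\<lambda>p. leaf_formula (map Suc p)) (leaf_paths d))"

lemma vars_below_leaf_formulas:
  "list_all (vars_below (Suc (tree_bits d))) (map (\<lambda>p. leaf_formula (map Suc p)) (leaf_paths d))"
  using leaf_paths_bounded by (auto simp: list_all_iff intro!: vars_below_leaf_formula)

lemma wf_generator_circuit: "wf_circuit (generator_circuit d)"
  unfolding generator_circuit_def by (intro wf_circuit_of_formulas vars_below_leaf_formulas)

lemma circ_depth_generator_circuit: "circ_depth (generator_circuit d) \<le> 6"
proof -
  have "foldr max (map formula_depth (map (\<lambda>p. leaf_formula (map Suc p)) (leaf_paths d))) 0 \<le> 6"
    by (simp add: foldr_max_le_iff leaf_formula_depth)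
  then show ?thesis
    unfolding generator_circuit_def using circ_depth_circuit_of_formulas[OF vars_below_leaf_formulas] le_trans
    by blast
qed

lemma circ_eval_generator_circuit:
  assumes "length ys = tree_bits d"
  shows "circ_eval (generator_circuit d) (s # ys) = generate d s ys"
proof -
  have "circ_eval (generator_circuit d) (s # ys)
        = map (eval_formula (s # ys)) (map (\<lambda>p. leaf_formula (map Suc p)) (leaf_paths d))"
    unfolding generator_circuit_def using assms
    by (simp add: circ_eval_circuit_of_formulas[OF vars_below_leaf_formulas])
  also have "\<dots> = generate d s ys"
    unfolding generate_def map_map
  proof (rule map_cong[OF refl])
    fix p
    assume "p \<in> set (leaf_paths d)"
    then have "\<forall>z \<in> set (map Suc p). z + Suc b \<le> length (s # ys)"
      using leaf_paths_bounded[of p d] assms by auto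
    moreover have "edge_block (s # ys) \<circ> Suc = edge_block ys"
      by (simp add: edge_block_def fun_eq_iff)
    ultimately show "(eval_formula (s # ys) \<circ> (\<lambda>p. leaf_formula (map Suc p))) p
                     = foldl child_spin s (map (edge_block ys) p)"
      by (simp add: eval_leaf_formula)
  qed
  finally show ?thesis .
qed

lemma output_dist_generator_circuit: "output_dist (generator_circuit d) = broadcast_leaves k correlation d"
proof -
  let ?C = "generator_circuit d"
  have "c_inputs ?C = Suc (tree_bits d)"
    by (simp add: generator_circuit_def circuit_of_formulas_def)
  then have "output_dist ?C = map_pmf (circ_eval ?C) (replicate_pmf (Suc (tree_bits d)) coin)"
    by (simp add: output_dist_def uniform_bits_eq_replicate_coin del: replicate_pmf.simps)
  also have "\<dots> = bind_pmf coin (\<lambda>s. map_pmf (\<lambda>ys. circ_eval ?C (s # ys)) (replicate_pmf (tree_bits d) coin))"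
    unfolding replicate_pmf_Suc_map map_bind_pmf pmf.map_comp o_def ..
  also have "\<dots> = bind_pmf coin (\<lambda>s. map_pmf (generate d s) (replicate_pmf (tree_bits d) coin))"
    by (intro bind_pmf_cong map_pmf_cong refl) (simp add: set_pmf_replicate_coin circ_eval_generator_circuit)
  also have "\<dots> = broadcast_leaves k correlation d"
    by (simp add: generate_distribution broadcast_leaves_def)
  finally show ?thesis .
qed

lemma gate_count_leaf_formula_le:
  assumes "2 \<le> k" "length P = d"
  shows "gate_count (leaf_formula P) \<le> 3 * Suc ((Suc b)\<^sup>2) * (k ^ d)\<^sup>2"
proof -
  let ?S = "Suc ((Suc b)\<^sup>2)" and ?n = "k ^ d"
  have "1 \<le> ?n\<^sup>2" "?n \<le> ?n\<^sup>2"
    using assms(1) by (simp_all add: power2_eq_square le_square)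
  then have small: "1 \<le> ?S * ?n\<^sup>2" "?n \<le> ?S * ?n\<^sup>2"
    by (simp_all add: trans_le_add1)
  have "gate_count (leaf_formula P) \<le> Suc (Suc d * Suc (Suc d * ?S))"
    using gate_count_leaf_formula[of P] assms(2) by simp
  also have "\<dots> \<le> Suc (?n * Suc (?n * ?S))"
    using less_power_base[OF assms(1), of d]
    by (intro Suc_le_mono[THEN iffD2] mult_le_mono Suc_le_mono[THEN iffD2] mult_le_mono1) auto
  also have "\<dots> \<le> 3 * ?S * ?n\<^sup>2"
    using small by (simp add: algebra_simps power2_eq_square)
  finally show ?thesis .
qed

lemma circ_size_generator_circuit:
  assumes "2 \<le> k"
  shows "circ_size (generator_circuit d) \<le> 5 * Suc ((Suc b)\<^sup>2) * (k ^ d) ^ 3"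
proof -
  let ?S = "Suc ((Suc b)\<^sup>2)" and ?n = "k ^ d"
  have n: "1 \<le> ?n" "d \<le> ?n"
    using assms less_power_base[OF assms, of d] by simp_all
  have "tree_bits d \<le> Suc b * d * ?n"
    using assms by (intro tree_bits_le) simp
  also have "\<dots> \<le> ?S * ?n * ?n"
    using n by (intro mult_le_mono) (auto simp: power2_eq_square)
  finally have bits: "tree_bits d \<le> ?S * ?n * ?n" .
  have "sum_list (map (gate_count \<circ> (\<lambda>p. leaf_formula (map Suc p))) (leaf_paths d))
        \<le> length (leaf_paths d) * (3 * ?S * ?n\<^sup>2)"
  proof (rule sum_list_map_le)
    fix p
    assume "p \<in> set (leaf_paths d)"
    then show "(gate_count \<circ> (\<lambda>p. leaf_formula (map Suc p))) p \<le> 3 * ?S * ?n\<^sup>2"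
      using gate_count_leaf_formula_le[OF assms, of "map Suc p"] leaf_paths_bounded[of p d] by simp
  qed
  then have "circ_size (generator_circuit d) \<le> Suc (?S * ?n * ?n) + ?n * (3 * ?S * ?n\<^sup>2)"
    using bits by (simp add: generator_circuit_def circ_size_circuit_of_formulas length_leaf_paths)
  also have "\<dots> \<le> 5 * ?S * ?n ^ 3"
  proof -
    have sq: "?n * ?n \<le> ?n ^ 3"
      using mult_le_mono2[OF n(1), of "?n * ?n"] by (simp add: power3_eq_cube)
    have "?S * ?n * ?n \<le> ?S * ?n ^ 3"
      using mult_le_mono2[OF sq, of ?S] by (simp only: mult.assoc)
    moreover have "1 \<le> ?S * ?n ^ 3"
      using mult_le_mono[of 1 ?S 1 "?n ^ 3"] one_le_power[OF n(1), of 3] by simp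
    moreover have "?n * (3 * ?S * ?n\<^sup>2) = 3 * (?S * ?n ^ 3)" "5 * ?S * ?n ^ 3 = 5 * (?S * ?n ^ 3)"
      by (simp_all add: power2_eq_square power3_eq_cube algebra_simps)
    ultimately show ?thesis
      by linarith
  qed
  finally show ?thesis .
qed

lemma circ_size_generator_circuit_le_power:
  assumes "2 \<le> k" "Suc b \<le> 4 * (k ^ d) ^ e"
  shows "circ_size (generator_circuit d) \<le> 85 * (k ^ d) ^ (2 * e + 3)"
proof -
  let ?n = "k ^ d"
  have "(Suc b)\<^sup>2 \<le> (4 * ?n ^ e)\<^sup>2"
    using assms(2) by (rule power_mono) simp
  also have "\<dots> = 16 * ?n ^ (2 * e)"
    by (simp add: power_mult_distrib power_mult[symmetric] mult_ac)
  moreover have "1 \<le> ?n ^ (2 * e)"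
    using assms(1) by simp
  ultimately have "Suc ((Suc b)\<^sup>2) \<le> 17 * ?n ^ (2 * e)"
    by linarith
  then have "circ_size (generator_circuit d) \<le> 5 * (17 * ?n ^ (2 * e)) * ?n ^ 3"
    using circ_size_generator_circuit[OF assms(1), of d] by (meson le_trans mult_le_mono1 mult_le_mono2)
  then show ?thesis
    by (simp add: power_add)
qed

lemma AC0_family_generator_circuit: "2 \<le> k \<Longrightarrow> AC0_family k generator_circuit"
  unfolding AC0_family_def using wf_generator_circuit circ_depth_generator_circuit circ_size_generator_circuit by blast

lemma tv_dist_generator_circuit:
  assumes "2 \<le> k" "-1 \<le> \<theta>" "\<theta> \<le> 1" "\<bar>correlation - \<theta>\<bar> \<le> 1 / 2 ^ b" "x + 2 * real (k ^ d) \<le> real b"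
  shows "tv_dist (output_dist (generator_circuit d)) (broadcast_leaves k \<theta> d) \<le> 2 powr (- x)"
proof -
  let ?n = "k ^ d"
  have "tv_dist (output_dist (generator_circuit d)) (broadcast_leaves k \<theta> d)
        \<le> real d * real k ^ d * (\<bar>correlation - \<theta>\<bar> / 2)"
    unfolding output_dist_generator_circuit using correlation_bounds assms(2,3)
    by (intro tv_dist_le broadcast_leaves_tv_close)
  also have "\<dots> \<le> real ?n * real ?n * (1 / 2 ^ b)"
  proof (rule mult_mono)
    show "real d * real k ^ d \<le> real ?n * real ?n"
      using less_power_base[OF assms(1), of d] by (simp add: mult_right_mono flip: of_nat_power)
    show "\<bar>correlation - \<theta>\<bar> / 2 \<le> 1 / 2 ^ b"
      using assms(4) by (simp add: field_simps)
  qed simp_all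
  also have "\<dots> \<le> 2 powr (- x)"
    using square_div_two_power_le[OF assms(5)] by simp
  finally show ?thesis .
qed

end

section \<open>Generation in constant depth\<close>

theorem exact_generation_dyadic:
  fixes a :: int
  assumes "2 \<le> k" "-1 \<le> \<theta>" "\<theta> \<le> 1" "\<theta> = a / 2 ^ b"
  shows "\<exists>C. AC0_family k C \<and> (\<forall>d. output_dist (C d) = broadcast_leaves k \<theta> d)"
proof -
  have "- (2 ^ b) \<le> real_of_int a" "real_of_int a \<le> 2 ^ b"
    using assms(2-4) by (simp_all add: field_simps)
  then have "real_of_int \<bar>a\<bar> \<le> real_of_int (2 ^ b)"
    unfolding of_int_abs of_int_power of_int_numeral abs_le_iff by linarith
  then have "\<bar>a\<bar> \<le> 2 ^ b"
    by (simp only: of_int_le_iff)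
  then interpret dyadic_generator k "a < 0" b "nat \<bar>a\<bar>"
    by unfold_locales (simp add: nat_le_iff)
  have "correlation = \<theta>"
    using assms(4) by (simp add: correlation_def)
  then show ?thesis
    using AC0_family_generator_circuit[OF assms(1)] output_dist_generator_circuit by blast
qed

lemma floor_dyadic_approximation:
  fixes y :: real
  assumes "0 \<le> y" "y \<le> 1"
  shows "nat \<lfloor>y * 2 ^ m\<rfloor> \<le> 2 ^ m" "\<bar>y - nat \<lfloor>y * 2 ^ m\<rfloor> / 2 ^ m\<bar> \<le> 1 / 2 ^ m"
proof -
  let ?x = "y * 2 ^ m"
  have x: "0 \<le> ?x" "?x \<le> 2 ^ m"
    using assms by simp_all
  then have fl: "real (nat \<lfloor>?x\<rfloor>) \<le> ?x" "?x < real (nat \<lfloor>?x\<rfloor>) + 1"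
    by linarith+
  then have "real (nat \<lfloor>?x\<rfloor>) \<le> real (2 ^ m)"
    using x unfolding of_nat_power of_nat_numeral by linarith
  then show "nat \<lfloor>?x\<rfloor> \<le> 2 ^ m"
    by (simp only: of_nat_le_iff)
  have "0 \<le> ?x - nat \<lfloor>?x\<rfloor>" "?x - nat \<lfloor>?x\<rfloor> \<le> 1"
    using fl by linarith+
  then have "\<bar>(?x - nat \<lfloor>?x\<rfloor>) / 2 ^ m\<bar> \<le> 1 / 2 ^ m"
    by (simp add: divide_right_mono)
  moreover have "y - nat \<lfloor>?x\<rfloor> / 2 ^ m = (?x - nat \<lfloor>?x\<rfloor>) / 2 ^ m"
    by (simp add: field_simps)
  ultimately show "\<bar>y - nat \<lfloor>?x\<rfloor> / 2 ^ m\<bar> \<le> 1 / 2 ^ m"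
    by simp
qed

lemma precision_le_power:
  assumes "1 \<le> n" "0 < c"
  shows "Suc (nat \<lceil>real n powr c\<rceil> + 2 * n) \<le> 4 * n ^ nat \<lceil>c\<rceil>"
proof -
  have "real n powr c \<le> real n powr real (nat \<lceil>c\<rceil>)"
    using assms by (intro powr_mono) auto
  then have "nat \<lceil>real n powr c\<rceil> \<le> n ^ nat \<lceil>c\<rceil>"
    using assms(1) by (simp add: powr_realpow ceiling_le_iff nat_le_iff)
  moreover have "n \<le> n ^ nat \<lceil>c\<rceil>"
    using assms by (simp add: self_le_power)
  moreover have "1 \<le> n ^ nat \<lceil>c\<rceil>"
    using assms(1) by simp
  ultimately show ?thesis
    by linarith
qed

theorem approximate_generation:
  assumes "2 \<le> k" "-1 \<le> \<theta>" "\<theta> \<le> 1" "0 < c"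
  shows "\<exists>C. AC0_family k C \<and>
           (\<forall>d. tv_dist (output_dist (C d)) (broadcast_leaves k \<theta> d) \<le> 2 powr (- (real (k ^ d) powr c)))"
proof -
  define m where "m d = nat \<lceil>real (k ^ d) powr c\<rceil> + 2 * k ^ d" for d
  define A where "A d = nat \<lfloor>\<bar>\<theta>\<bar> * 2 ^ m d\<rfloor>" for d
  define C where "C d = dyadic_generator.generator_circuit k (\<theta> < 0) (m d) (A d) d" for d
  have "wf_circuit (C d) \<and> circ_depth (C d) \<le> 6 \<and> circ_size (C d) \<le> 85 * (k ^ d) ^ (2 * nat \<lceil>c\<rceil> + 3)
        \<and> tv_dist (output_dist (C d)) (broadcast_leaves k \<theta> d) \<le> 2 powr (- (real (k ^ d) powr c))" for d
  proof -
    interpret dyadic_generator k "\<theta> < 0" "m d" "A d"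
      using floor_dyadic_approximation(1)[of "\<bar>\<theta>\<bar>"] assms(2,3) by unfold_locales (simp add: A_def)
    have "\<bar>correlation - \<theta>\<bar> = \<bar>\<bar>\<theta>\<bar> - A d / 2 ^ m d\<bar>"
      unfolding correlation_def by (cases "\<theta> < 0") (simp_all add: abs_minus_commute)
    then have "\<bar>correlation - \<theta>\<bar> \<le> 1 / 2 ^ m d"
      using floor_dyadic_approximation(2)[of "\<bar>\<theta>\<bar>" "m d"] assms(2,3) by (simp add: A_def)
    moreover have "Suc (m d) \<le> 4 * (k ^ d) ^ nat \<lceil>c\<rceil>"
      unfolding m_def using precision_le_power[of "k ^ d" c] assms(1,4) by simp
    ultimately show ?thesis
      unfolding C_def using assms wf_generator_circuit circ_depth_generator_circuit
        circ_size_generator_circuit_le_power tv_dist_generator_circuit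
      by (simp add: m_def)
  qed
  then show ?thesis
    unfolding AC0_family_def by blast
qed

theorem mainTheorem5:
  fixes k :: nat and \<theta> :: real
  assumes "k \<ge> 2" and "-1 \<le> \<theta>" and "\<theta> \<le> 1"
  shows "((\<exists>a::int. \<exists>b::nat. \<theta> = a / 2 ^ b) \<longrightarrow>
            (\<exists>C. AC0_family k C \<and> (\<forall>d. output_dist (C d) = broadcast_leaves k \<theta> d)))
       \<and> (\<forall>c::real. c > 0 \<longrightarrow>
            (\<exists>C. AC0_family k C \<and>
               (\<forall>d. tv_dist (output_dist (C d)) (broadcast_leaves k \<theta> d)
                      \<le> 2 powr (- (real (k ^ d) powr c)))))"
  using exact_generation_dyadic[OF assms] approximate_generation[OF assms] by blast

end
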